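(* Let $(M,g)$ and $(N,h)$ be Riemannian manifolds, $\dim M=m$, and $f:M\to N$ a smooth map such that $\tilde g=g-f^*h$ is positive definite. Let $b:M\to[0,1)$ be the largest eigenvalue of $f^*h$ with respect to $g$. Let $X_1,\dots,X_m$ be a local $g$-orthonormal frame, $\tilde g_{ij}=g(X_i,X_j)-h(df(X_i),df(X_j))$ with inverse $(\tilde g^{ij})$, and define \[ W=\mathrm{trace}_{g-f^*h}(\nabla df)=\sum_{i,j}\tilde g^{ij}\nabla df(X_i,X_j)\in C^\infty(f^{-1}TN),\qquad Z=\sum_{i,j}\tilde g^{ij}h(W,df(X_i))X_j\in C^\infty(TM). \] Then $\|Z\|\leq \frac{\sqrt b}{1-b}\|W\|$ and $\|W\|\leq\frac{\sqrt m}{1-b}\|\nabla df\|$.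
   Context: $\nabla df$ is the second fundamental form of $f$ (computed with the Levi-Civita connections of $g$ and $h$), with norm $\|\nabla df\|^2=\sum_{i,j}h(\nabla df(X_i,X_j),\nabla df(X_i,X_j))$; norms of $Z$ and $W$ are taken with respect to $g$ and $h$ respectively. *)

theory Defs
  imports "HOL-Analysis.Analysis"
begin

text \<open>Pointwise setting. The index type 'm enumerates a g-orthonormal frame
X_1..X_m of T_pM (so m = CARD('m)); vectors of T_pM are identified with their
frame coordinates in real^'m, and then g becomes the standard inner product.
The fibre T_{f(p)}N with metric h is a finite-dimensional inner product space 'b.
dF i = df(X_i), D i j = (nabla df)(X_i,X_j).\<close>

definition pullback_matrix :: "('m::finite \<Rightarrow> 'b::real_inner) \<Rightarrow> real^'m^'m" where
  "pullback_matrix dF = (\<chi> i j. dF i \<bullet> dF j)"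

definition gtilde_matrix :: "('m::finite \<Rightarrow> 'b::real_inner) \<Rightarrow> real^'m^'m" where
  "gtilde_matrix dF = mat 1 - pullback_matrix dF"

definition largest_eigenvalue :: "real^'n^'n \<Rightarrow> real" where
  "largest_eigenvalue A = Max {c. \<exists>x. x \<noteq> 0 \<and> A *v x = c *\<^sub>R x}"

definition W_field :: "('m::finite \<Rightarrow> 'b::real_inner) \<Rightarrow> ('m \<Rightarrow> 'm \<Rightarrow> 'b) \<Rightarrow> 'b" where
  "W_field dF D = (\<Sum>i\<in>UNIV. \<Sum>j\<in>UNIV. (matrix_inv (gtilde_matrix dF) $ i $ j) *\<^sub>R D i j)"

definition Z_field :: "('m::finite \<Rightarrow> 'b::real_inner) \<Rightarrow> ('m \<Rightarrow> 'm \<Rightarrow> 'b) \<Rightarrow> real^'m" where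
  "Z_field dF D = (\<chi> j. \<Sum>i\<in>UNIV. matrix_inv (gtilde_matrix dF) $ i $ j * (W_field dF D \<bullet> dF i))"

definition hess_norm :: "('m::finite \<Rightarrow> 'm \<Rightarrow> 'b::real_normed_vector) \<Rightarrow> real" where
  "hess_norm D = sqrt (\<Sum>i\<in>UNIV. \<Sum>j\<in>UNIV. (norm (D i j))\<^sup>2)"

end

theory Submission
  imports Defs
begin

(*
  Write L for df in frame coordinates (frame_map), so that f^*h has Gram matrix P = L^T L and
  g~ = I - P. The Rayleigh quotient of the symmetric matrix P attains its maximum at an
  eigenvector, hence |L x|^2 <= b |x|^2 for the largest eigenvalue b, i.e.
  x . g~ x >= (1 - b) |x|^2, and positive definiteness at that eigenvector gives b < 1.
  This coercivity controls g~^-1: for Z = g~^-1 (L^T W) we get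
  (1 - b) |Z|^2 <= Z . g~ Z = W . L Z <= sqrt b |W| |Z|, and every column of g~^-1 has norm
  at most 1 / (1 - b), so its Frobenius norm is at most sqrt m / (1 - b) and Cauchy-Schwarz
  bounds W = sum g~^ij nabla df(X_i, X_j).
*)

lemma nonneg_quadratic_imp_linear_coeff_zero:
  fixes k r :: real
  assumes nonneg: "\<And>t. 0 \<le> 2 * t * k + t\<^sup>2 * r" and "0 \<le> r"
  shows "k = 0"
proof (rule ccontr)
  assume "k \<noteq> 0"
  define t where "t = - k / (r + 1)"
  have "(r + 1) * t = - k"
    using \<open>0 \<le> r\<close> by (simp add: t_def)
  then have "(r + 1)\<^sup>2 * (2 * t * k + t\<^sup>2 * r) = - (k\<^sup>2 * (r + 2))"
    by algebra
  also have "\<dots> < 0"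
    using \<open>k \<noteq> 0\<close> \<open>0 \<le> r\<close> by simp
  finally show False
    using mult_nonneg_nonneg[OF zero_le_power2[of "r + 1"] nonneg[of t]] by linarith
qed

lemma symmetric_matrix_inner_commute:
  fixes A :: "real^'n^'n"
  assumes "transpose A = A"
  shows "x \<bullet> (A *v y) = (A *v x) \<bullet> y"
  by (metis assms dot_lmul_matrix vector_transpose_matrix)

lemma symmetric_quadratic_form_add_scaleR:
  fixes B :: "real^'n^'n"
  assumes sym: "transpose B = B"
  shows "(y + t *\<^sub>R z) \<bullet> (B *v (y + t *\<^sub>R z))
        = y \<bullet> (B *v y) + 2 * t * (z \<bullet> (B *v y)) + t\<^sup>2 * (z \<bullet> (B *v z))"
proof -
  have "y \<bullet> (B *v z) = z \<bullet> (B *v y)"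
    using symmetric_matrix_inner_commute[OF sym, of y z] by (simp add: inner_commute)
  then show ?thesis
    by (simp add: matrix_vector_right_distrib linear_scale inner_add_left inner_add_right
          power2_eq_square algebra_simps)
qed

lemma psd_symmetric_matrix_kernel:
  fixes B :: "real^'n^'n"
  assumes sym: "transpose B = B" and psd: "\<And>x. 0 \<le> x \<bullet> (B *v x)"
    and null: "y \<bullet> (B *v y) = 0"
  shows "B *v y = 0"
proof -
  let ?z = "B *v y"
  have "0 \<le> 2 * t * (?z \<bullet> ?z) + t\<^sup>2 * (?z \<bullet> (B *v ?z))" for t
    using psd[of "y + t *\<^sub>R ?z"] null
    by (simp add: symmetric_quadratic_form_add_scaleR[OF sym])
  then have "?z \<bullet> ?z = 0"
    using nonneg_quadratic_imp_linear_coeff_zero psd by blast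
  then show ?thesis by simp
qed

lemma symmetric_matrix_rayleigh_max:
  fixes A :: "real^'n^'n"
  assumes sym: "transpose A = A"
  obtains y where "norm y = 1" "A *v y = (y \<bullet> (A *v y)) *\<^sub>R y"
    "\<And>x. x \<bullet> (A *v x) \<le> (y \<bullet> (A *v y)) * (norm x)\<^sup>2"
proof -
  let ?q = "\<lambda>x. x \<bullet> (A *v x)"
  have "continuous_on (sphere 0 1) ?q"
    by (intro continuous_intros linear_continuous_on matrix_vector_mul_bounded_linear)
  moreover have "sphere (0 :: real^'n) 1 \<noteq> {}"
    by simp
  ultimately obtain y
    where "y \<in> sphere 0 1" and ymax: "\<And>x. x \<in> sphere 0 1 \<Longrightarrow> ?q x \<le> ?q y"
    using continuous_attains_sup[OF compact_sphere] by blast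
  then have y: "norm y = 1"
    by simp
  define l where "l = ?q y"
  have bound: "?q x \<le> l * (norm x)\<^sup>2" for x
  proof (cases "x = 0")
    case False
    have "?q ((1 / norm x) *\<^sub>R x) = ?q x / (norm x)\<^sup>2"
      by (simp add: linear_scale power2_eq_square)
    then show ?thesis
      using ymax[of "(1 / norm x) *\<^sub>R x"] False by (simp add: l_def divide_le_eq)
  qed simp
  let ?B = "l *\<^sub>R mat 1 - A"
  have "?B *v y = 0"
  proof (rule psd_symmetric_matrix_kernel)
    show "transpose ?B = ?B"
      using sym by (simp add: transpose_def vec_eq_iff mat_def)
    show "0 \<le> x \<bullet> (?B *v x)" for x
      using bound[of x]
      by (simp add: matrix_vector_mult_diff_rdistrib inner_diff_right power2_norm_eq_inner
          flip: scaleR_matrix_vector_assoc)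
    show "y \<bullet> (?B *v y) = 0"
      using y
      by (simp add: matrix_vector_mult_diff_rdistrib inner_diff_right dot_square_norm l_def
          flip: scaleR_matrix_vector_assoc)
  qed
  then have "A *v y = l *\<^sub>R y"
    by (simp add: matrix_vector_mult_diff_rdistrib flip: scaleR_matrix_vector_assoc)
  then show ?thesis
    using that y bound l_def by blast
qed

lemma finite_eigenvalues_symmetric:
  fixes A :: "real^'n^'n"
  assumes sym: "transpose A = A"
  shows "finite {c. \<exists>x. x \<noteq> 0 \<and> A *v x = c *\<^sub>R x}" (is "finite ?S")
proof -
  have "\<exists>v. \<forall>c\<in>?S. v c \<noteq> 0 \<and> A *v v c = c *\<^sub>R v c"
    by (rule bchoice) blast
  then obtain v where v: "\<And>c. c \<in> ?S \<Longrightarrow> v c \<noteq> 0 \<and> A *v v c = c *\<^sub>R v c"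
    by blast
  have orth: "v c \<bullet> v d = 0" if "c \<in> ?S" "d \<in> ?S" "c \<noteq> d" for c d
  proof -
    have "d * (v c \<bullet> v d) = v c \<bullet> (A *v v d)"
      using v[OF that(2)] by simp
    also have "\<dots> = (A *v v c) \<bullet> v d"
      by (rule symmetric_matrix_inner_commute[OF sym])
    also have "\<dots> = c * (v c \<bullet> v d)"
      using v[OF that(1)] by simp
    finally show ?thesis
      using that(3) by simp
  qed
  have "inj_on v ?S"
  proof (rule inj_onI)
    fix c d assume c: "c \<in> ?S" and d: "d \<in> ?S" and "v c = v d"
    show "c = d"
    proof (rule ccontr)
      assume "c \<noteq> d"
      then have "v c \<bullet> v c = 0"
        using orth[OF c d] \<open>v c = v d\<close> by simp
      then show False
        using v[OF c] by simp
    qed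
  qed
  moreover have "independent (v ` ?S)"
  proof (rule pairwise_orthogonal_independent)
    show "pairwise orthogonal (v ` ?S)"
      using orth by (auto simp: pairwise_def orthogonal_def)
    show "0 \<notin> v ` ?S"
    proof
      assume "0 \<in> v ` ?S"
      then obtain c where "0 = v c" and c: "c \<in> ?S"
        by (rule imageE)
      with v[OF c] show False
        by simp
    qed
  qed
  ultimately show ?thesis
    using finite_imageD finiteI_independent by blast
qed

lemma largest_eigenvalue_symmetric:
  fixes A :: "real^'n^'n"
  assumes sym: "transpose A = A"
  shows largest_eigenvalue_symmetric_eigenvector:
      "\<exists>x. x \<noteq> 0 \<and> A *v x = largest_eigenvalue A *\<^sub>R x"
    and quadratic_form_le_largest_eigenvalue:
      "z \<bullet> (A *v z) \<le> largest_eigenvalue A * (norm z)\<^sup>2"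
proof -
  obtain y where y: "norm y = 1" "A *v y = (y \<bullet> (A *v y)) *\<^sub>R y"
    and bound: "\<And>x. x \<bullet> (A *v x) \<le> (y \<bullet> (A *v y)) * (norm x)\<^sup>2"
    using symmetric_matrix_rayleigh_max[OF sym] by blast
  have top: "largest_eigenvalue A = y \<bullet> (A *v y)"
    unfolding largest_eigenvalue_def
  proof (rule Max_eqI[OF finite_eigenvalues_symmetric[OF sym]])
    fix c assume "c \<in> {c. \<exists>x. x \<noteq> 0 \<and> A *v x = c *\<^sub>R x}"
    then obtain x where x: "x \<noteq> 0" "A *v x = c *\<^sub>R x" by blast
    then have "c * (norm x)\<^sup>2 \<le> (y \<bullet> (A *v y)) * (norm x)\<^sup>2"
      using bound[of x] by (simp add: power2_norm_eq_inner)
    with x(1) show "c \<le> y \<bullet> (A *v y)"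
      by simp
  qed (use y in \<open>auto intro!: exI[of _ y]\<close>)
  show "\<exists>x. x \<noteq> 0 \<and> A *v x = largest_eigenvalue A *\<^sub>R x"
    using y top by (auto intro!: exI[of _ y])
  show "z \<bullet> (A *v z) \<le> largest_eigenvalue A * (norm z)\<^sup>2"
    using bound top by simp
qed

lemma matrix_inv_right:
  fixes A :: "'a::semiring_1^'n^'m"
  assumes "invertible A"
  shows "A ** matrix_inv A = mat 1"
  using someI_ex[OF assms[unfolded invertible_def]] unfolding matrix_inv_def by auto

lemma transpose_matrix_inv_symmetric:
  fixes G :: "real^'n^'n"
  assumes "invertible G" and sym: "transpose G = G"
  shows "transpose (matrix_inv G) = matrix_inv G"
proof -
  let ?I = "matrix_inv G"
  have left: "transpose ?I ** G = mat 1"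
    by (metis sym matrix_transpose_mul transpose_mat matrix_inv_right[OF assms(1)])
  have "transpose ?I = transpose ?I ** (G ** ?I)"
    by (simp add: matrix_inv_right[OF assms(1)])
  also have "\<dots> = (transpose ?I ** G) ** ?I"
    by (simp add: matrix_mul_assoc)
  also have "\<dots> = ?I"
    by (simp add: left)
  finally show ?thesis .
qed

lemma coercive_matrix_invertible:
  fixes G :: "real^'n^'n"
  assumes "0 < c" and coercive: "\<And>x. c * (norm x)\<^sup>2 \<le> x \<bullet> (G *v x)"
  shows "invertible G"
proof -
  have "x = 0" if "G *v x = 0" for x
    using coercive[of x] that \<open>0 < c\<close> by (simp add: mult_le_0_iff)
  then show ?thesis
    using matrix_left_invertible_ker invertible_left_inverse by blast
qed

lemma coercive_matrix_inv_inner: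
  fixes G :: "real^'n^'n"
  assumes "0 < c" and coercive: "\<And>x. c * (norm x)\<^sup>2 \<le> x \<bullet> (G *v x)"
  shows "c * (norm (matrix_inv G *v v))\<^sup>2 \<le> (matrix_inv G *v v) \<bullet> v"
proof -
  have "G *v (matrix_inv G *v v) = v"
    by (simp add: matrix_vector_mul_assoc
        matrix_inv_right[OF coercive_matrix_invertible[OF assms]])
  then show ?thesis
    using coercive[of "matrix_inv G *v v"] by simp
qed

lemma coercive_matrix_inv_norm_le:
  fixes G :: "real^'n^'n"
  assumes "0 < c" and coercive: "\<And>x. c * (norm x)\<^sup>2 \<le> x \<bullet> (G *v x)"
  shows "c * norm (matrix_inv G *v v) \<le> norm v"
proof -
  let ?y = "matrix_inv G *v v"
  have "(c * norm ?y) * norm ?y \<le> norm v * norm ?y"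
    using coercive_matrix_inv_inner[OF assms, of v] norm_cauchy_schwarz[of ?y v]
    by (simp add: power2_eq_square mult.commute mult.left_commute)
  then show ?thesis
    by (cases "?y = 0") (simp_all add: mult_le_cancel_right)
qed

lemma coercive_matrix_inv_sum_sq_le:
  fixes G :: "real^'n^'n"
  assumes "0 < c" and coercive: "\<And>x. c * (norm x)\<^sup>2 \<le> x \<bullet> (G *v x)"
  shows "(\<Sum>i\<in>UNIV. \<Sum>j\<in>UNIV. (matrix_inv G $ i $ j)\<^sup>2) \<le> CARD('n) / c\<^sup>2"
proof -
  have column: "(\<Sum>i\<in>UNIV. (matrix_inv G $ i $ j)\<^sup>2) \<le> 1 / c\<^sup>2" for j
  proof -
    have "c * norm (matrix_inv G *v axis j 1) \<le> 1"
      using coercive_matrix_inv_norm_le[OF assms, of "axis j 1"] by simp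
    then have "(norm (matrix_inv G *v axis j 1))\<^sup>2 \<le> (1 / c)\<^sup>2"
      using \<open>0 < c\<close> by (intro power_mono) (simp_all add: field_simps)
    moreover have
      "(norm (matrix_inv G *v axis j 1))\<^sup>2 = (\<Sum>i\<in>UNIV. (matrix_inv G $ i $ j)\<^sup>2)"
      by (simp add: matrix_vector_mult_basis column_def norm_vec_def L2_set_def sum_nonneg)
    ultimately show ?thesis
      by (simp add: power_divide)
  qed
  have "(\<Sum>i\<in>UNIV. \<Sum>j\<in>UNIV. (matrix_inv G $ i $ j)\<^sup>2)
      = (\<Sum>j\<in>UNIV. \<Sum>i\<in>UNIV. (matrix_inv G $ i $ j)\<^sup>2)"
    by (rule sum.swap)
  also have "\<dots> \<le> (\<Sum>j\<in>(UNIV::'n set). 1 / c\<^sup>2)"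
    by (intro sum_mono column)
  finally show ?thesis
    by simp
qed

lemma norm_double_sum_scaleR_le:
  fixes a :: "'m::finite \<Rightarrow> 'm \<Rightarrow> real" and D :: "'m \<Rightarrow> 'm \<Rightarrow> 'b::real_normed_vector"
  shows "norm (\<Sum>i\<in>UNIV. \<Sum>j\<in>UNIV. a i j *\<^sub>R D i j)
    \<le> sqrt (\<Sum>i\<in>UNIV. \<Sum>j\<in>UNIV. (a i j)\<^sup>2) * hess_norm D"
proof -
  have pairs: "(\<Sum>i\<in>UNIV. \<Sum>j\<in>UNIV. h i j) = (\<Sum>p\<in>UNIV. case_prod h p)"
    for h :: "'m \<Rightarrow> 'm \<Rightarrow> real"
    unfolding UNIV_Times_UNIV[symmetric] sum.cartesian_product by simp
  have "norm (\<Sum>i\<in>UNIV. \<Sum>j\<in>UNIV. a i j *\<^sub>R D i j)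
      \<le> (\<Sum>i\<in>UNIV. \<Sum>j\<in>UNIV. \<bar>a i j\<bar> * norm (D i j))"
    by (rule order_trans[OF norm_sum sum_mono], rule order_trans[OF norm_sum sum_mono]) simp
  also have "\<dots> = (\<Sum>p\<in>UNIV. \<bar>case_prod a p\<bar> * \<bar>norm (case_prod D p)\<bar>)"
    by (simp add: pairs case_prod_beta)
  also have "\<dots> \<le> L2_set (case_prod a) UNIV * L2_set (\<lambda>p. norm (case_prod D p)) UNIV"
    by (rule L2_set_mult_ineq)
  also have "\<dots> = sqrt (\<Sum>i\<in>UNIV. \<Sum>j\<in>UNIV. (a i j)\<^sup>2) * hess_norm D"
    by (simp add: L2_set_def hess_norm_def pairs case_prod_beta)
  finally show ?thesis .
qed

definition frame_map :: "('m::finite \<Rightarrow> 'b::real_inner) \<Rightarrow> real^'m \<Rightarrow> 'b" where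
  "frame_map dF y = (\<Sum>j\<in>UNIV. y $ j *\<^sub>R dF j)"

lemma pullback_matrix_inner:
  "x \<bullet> (pullback_matrix dF *v y) = frame_map dF x \<bullet> frame_map dF y"
proof -
  have "(pullback_matrix dF *v y) $ i = dF i \<bullet> frame_map dF y" for i
    by (simp add: pullback_matrix_def frame_map_def matrix_vector_mult_def inner_sum_right
        mult.commute)
  then show ?thesis
    by (simp add: inner_vec_def frame_map_def inner_sum_left)
qed

lemma transpose_pullback_matrix: "transpose (pullback_matrix dF) = pullback_matrix dF"
  by (simp add: pullback_matrix_def transpose_def vec_eq_iff inner_commute)

lemma transpose_gtilde_matrix: "transpose (gtilde_matrix dF) = gtilde_matrix dF"
  by (simp add: gtilde_matrix_def pullback_matrix_def transpose_def vec_eq_iff mat_def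
      inner_commute)

lemma gtilde_matrix_inner:
  "x \<bullet> (gtilde_matrix dF *v y) = x \<bullet> y - x \<bullet> (pullback_matrix dF *v y)"
  by (simp add: gtilde_matrix_def matrix_vector_mult_diff_rdistrib inner_diff_right)

lemma largest_eigenvalue_pullback_nonneg: "0 \<le> largest_eigenvalue (pullback_matrix dF)"
proof -
  obtain x where x: "x \<noteq> 0"
    "pullback_matrix dF *v x = largest_eigenvalue (pullback_matrix dF) *\<^sub>R x"
    using largest_eigenvalue_symmetric_eigenvector[OF transpose_pullback_matrix] by blast
  then have "largest_eigenvalue (pullback_matrix dF) * (x \<bullet> x) = (norm (frame_map dF x))\<^sup>2"
    by (metis pullback_matrix_inner inner_scaleR_right power2_norm_eq_inner)
  then have "0 \<le> largest_eigenvalue (pullback_matrix dF) * (x \<bullet> x)"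
    by simp
  moreover have "0 < x \<bullet> x"
    using x(1) by simp
  ultimately show ?thesis
    by (auto simp: zero_le_mult_iff)
qed

lemma norm_frame_map_le:
  "norm (frame_map dF x) \<le> sqrt (largest_eigenvalue (pullback_matrix dF)) * norm x"
proof -
  have "(norm (frame_map dF x))\<^sup>2 \<le> largest_eigenvalue (pullback_matrix dF) * (norm x)\<^sup>2"
    using quadratic_form_le_largest_eigenvalue[OF transpose_pullback_matrix, where z = x]
    by (simp add: pullback_matrix_inner power2_norm_eq_inner)
  then have "norm (frame_map dF x)
      \<le> sqrt (largest_eigenvalue (pullback_matrix dF) * (norm x)\<^sup>2)"
    by (rule real_le_rsqrt)
  then show ?thesis
    by (simp add: real_sqrt_mult)
qed

lemma gtilde_matrix_coercive:
  "(1 - largest_eigenvalue (pullback_matrix dF)) * (norm x)\<^sup>2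
    \<le> x \<bullet> (gtilde_matrix dF *v x)"
  using quadratic_form_le_largest_eigenvalue[OF transpose_pullback_matrix, where z = x]
  by (simp add: gtilde_matrix_inner power2_norm_eq_inner algebra_simps)

lemma largest_eigenvalue_pullback_less_one:
  assumes posdef: "\<And>x::real^'m::finite. x \<noteq> 0 \<Longrightarrow> x \<bullet> (gtilde_matrix dF *v x) > 0"
  shows "largest_eigenvalue (pullback_matrix dF) < 1"
proof -
  obtain x where x: "x \<noteq> 0"
    "pullback_matrix dF *v x = largest_eigenvalue (pullback_matrix dF) *\<^sub>R x"
    using largest_eigenvalue_symmetric_eigenvector[OF transpose_pullback_matrix] by blast
  then have "0 < (1 - largest_eigenvalue (pullback_matrix dF)) * (x \<bullet> x)"
    using posdef[OF x(1)] by (simp add: gtilde_matrix_inner algebra_simps)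
  moreover have "0 \<le> x \<bullet> x"
    by simp
  ultimately show ?thesis
    by (auto simp: zero_less_mult_iff)
qed

lemma norm_gtilde_inv_pairing_le:
  fixes dF :: "'m::finite \<Rightarrow> 'b::real_inner"
  assumes posdef: "\<And>x::real^'m. x \<noteq> 0 \<Longrightarrow> x \<bullet> (gtilde_matrix dF *v x) > 0"
  defines "b \<equiv> largest_eigenvalue (pullback_matrix dF)"
  shows "norm (matrix_inv (gtilde_matrix dF) *v (\<chi> i. w \<bullet> dF i))
    \<le> sqrt b / (1 - b) * norm w"
proof -
  let ?y = "matrix_inv (gtilde_matrix dF) *v (\<chi> i. w \<bullet> dF i)"
  have b1: "0 < 1 - b"
    using largest_eigenvalue_pullback_less_one[OF posdef] by (simp add: b_def)
  have "(1 - b) * (norm ?y)\<^sup>2 \<le> ?y \<bullet> (\<chi> i. w \<bullet> dF i)"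
    by (rule coercive_matrix_inv_inner[OF b1 gtilde_matrix_coercive[where dF = dF, folded b_def]])
  also have "\<dots> = w \<bullet> frame_map dF ?y"
    by (simp add: frame_map_def inner_vec_def inner_sum_right inner_commute)
  also have "\<dots> \<le> norm w * norm (frame_map dF ?y)"
    by (rule norm_cauchy_schwarz)
  also have "\<dots> \<le> norm w * (sqrt b * norm ?y)"
    unfolding b_def by (rule mult_left_mono[OF norm_frame_map_le norm_ge_zero])
  finally have "((1 - b) * norm ?y) * norm ?y \<le> (sqrt b * norm w) * norm ?y"
    by (simp add: power2_eq_square algebra_simps)
  then have "(1 - b) * norm ?y \<le> sqrt b * norm w"
    by (cases "?y = 0")
      (simp_all add: b_def largest_eigenvalue_pullback_nonneg mult_le_cancel_right)
  then show ?thesis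
    using b1 by (simp add: field_simps)
qed

lemma Z_field_eq:
  assumes "invertible (gtilde_matrix dF)"
  shows "Z_field dF D = matrix_inv (gtilde_matrix dF) *v (\<chi> i. W_field dF D \<bullet> dF i)"
proof -
  have "Z_field dF D
      = transpose (matrix_inv (gtilde_matrix dF)) *v (\<chi> i. W_field dF D \<bullet> dF i)"
    by (simp add: Z_field_def vec_eq_iff matrix_vector_mult_def transpose_def)
  then show ?thesis
    by (simp add: transpose_matrix_inv_symmetric[OF assms transpose_gtilde_matrix])
qed

lemma norm_W_field_le:
  fixes dF :: "'m::finite \<Rightarrow> 'b::real_inner"
  assumes posdef: "\<And>x::real^'m. x \<noteq> 0 \<Longrightarrow> x \<bullet> (gtilde_matrix dF *v x) > 0"
  defines "b \<equiv> largest_eigenvalue (pullback_matrix dF)"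
  shows "norm (W_field dF D) \<le> sqrt (real CARD('m)) / (1 - b) * hess_norm D"
proof -
  let ?a = "\<lambda>i j. matrix_inv (gtilde_matrix dF) $ i $ j"
  have b1: "0 < 1 - b"
    using largest_eigenvalue_pullback_less_one[OF posdef] by (simp add: b_def)
  have "sqrt (\<Sum>i\<in>UNIV. \<Sum>j\<in>UNIV. (?a i j)\<^sup>2) \<le> sqrt (CARD('m) / (1 - b)\<^sup>2)"
    using coercive_matrix_inv_sum_sq_le[OF b1 gtilde_matrix_coercive[where dF = dF, folded b_def]]
    by simp
  also have "\<dots> = sqrt (real CARD('m)) / (1 - b)"
    using b1 by (simp add: real_sqrt_divide)
  finally have "sqrt (\<Sum>i\<in>UNIV. \<Sum>j\<in>UNIV. (?a i j)\<^sup>2) * hess_norm D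
      \<le> sqrt (real CARD('m)) / (1 - b) * hess_norm D"
    by (rule mult_right_mono) (simp add: hess_norm_def sum_nonneg)
  then show ?thesis
    using norm_double_sum_scaleR_le[of ?a D] unfolding W_field_def by linarith
qed

theorem lemma2p2:
  fixes dF :: "'m::finite \<Rightarrow> 'b::euclidean_space"
    and D :: "'m \<Rightarrow> 'm \<Rightarrow> 'b"
  assumes sym: "\<And>i j. D i j = D j i"
    and posdef: "\<And>x::real^'m. x \<noteq> 0 \<Longrightarrow> x \<bullet> (gtilde_matrix dF *v x) > 0"
  defines "b \<equiv> largest_eigenvalue (pullback_matrix dF)"
  shows "norm (Z_field dF D) \<le> sqrt b / (1 - b) * norm (W_field dF D) \<and>
         norm (W_field dF D) \<le> sqrt (real CARD('m)) / (1 - b) * hess_norm D"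
proof
  have "invertible (gtilde_matrix dF)"
    using coercive_matrix_invertible[OF _ gtilde_matrix_coercive]
      largest_eigenvalue_pullback_less_one[OF posdef] by simp
  then show "norm (Z_field dF D) \<le> sqrt b / (1 - b) * norm (W_field dF D)"
    using norm_gtilde_inv_pairing_le[OF posdef] unfolding b_def by (simp add: Z_field_eq)
  show "norm (W_field dF D) \<le> sqrt (real CARD('m)) / (1 - b) * hess_norm D"
    unfolding b_def by (rule norm_W_field_le[OF posdef])
qed

end
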